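(* Let $p\equiv 1\pmod 4$ be a prime, let $\zeta=e^{2\pi\mathbf i/(p-1)}$, and let $g\in\{1,\ldots,p-1\}$ be an integer that is a primitive root modulo $p$. Suppose $\mathfrak p$ is a prime ideal of the ring of integers of $\mathbb Q(\zeta)$ lying above $p$ such that $g\equiv\zeta\pmod{\mathfrak p}$. Then $$\prod_{1\le i<j\le\frac{p-1}{2}}(g^{2j}-g^{2i})\equiv e^{\frac{(p-3)(3p+1)}{16}\pi\mathbf i}\cdot\Big(\frac{p-1}{2}\Big)^{\frac{p-1}{4}}\pmod{\mathfrak p}.$$
   Context: $\mathbf i=\sqrt{-1}$. (Note $e^{\frac{(p-3)(3p+1)}{16}\pi\mathbf i}$ is a root of unity lying in $\mathbb Q(\zeta)$ when $p\equiv1\pmod 4$.) *)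

theory Defs
  imports "HOL-Complex_Analysis.Complex_Analysis" "HOL-Number_Theory.Number_Theory"
    "HOL-Algebra.Ideal"
begin

definition zeta :: "nat \<Rightarrow> complex" where
  "zeta p = exp (2 * of_real pi * \<i> / of_nat (p - 1))"

text \<open>The cyclotomic field Q(zeta), as a subfield of the complex numbers:
  all rational polynomial expressions in zeta (zeta is algebraic, so this is the
  field Q(zeta)).\<close>
definition cyc_field :: "complex \<Rightarrow> complex set" where
  "cyc_field z = {x. \<exists>q :: rat poly. x = poly (map_poly of_rat q) z}"

definition ring_of_integers :: "complex \<Rightarrow> complex set" where
  "ring_of_integers z = {x \<in> cyc_field z. algebraic_int x}"

definition OK_ring :: "complex \<Rightarrow> complex ring" where
  "OK_ring z = \<lparr>carrier = ring_of_integers z, monoid.mult = (*), one = 1,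
                 zero = 0, add = (+)\<rparr>"

end

theory Submission
  imports Defs
begin

(* Put n = (p - 1) / 2 and w = zeta^2, a primitive n-th root of unity. Since g = zeta modulo the
   prime ideal, the product is congruent to the Vandermonde product V = prod_{i<j} (w^j - w^i), which
   can be evaluated exactly in C. Each factor equals e^{i pi (i+j)/n} * i * 2 sin (pi (j-i)/n), so V is
   e^{i pi (n-1)(3n+2)/4} times a non-negative real R. On the other hand |V|^2 = prod_{i<>j} |w^i - w^j|
   = n^n, because prod_{v<>u} (u - v) = n u^(n-1) for every n-th root of unity u (the derivative of
   X^n - 1 at u). Hence R = n^(n/2). *)

lemma prod_one_minus_roots_unity:
  assumes "n > 0"
  shows "(\<Prod>z\<in>{z::complex. z ^ n = 1} - {1}. 1 - z) = of_nat n"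
proof -
  define A where "A = {z::complex. z ^ n = 1} - {1}"
  have fin: "finite A" unfolding A_def using assms by (auto intro: finite_roots_unity)
  have card: "card A = n - 1" unfolding A_def using assms card_roots_unity_eq[of n]
    by (subst card_Diff_singleton) (auto intro: finite_roots_unity)
  define q where "q = (\<Prod>z\<in>A. [:-z, 1:])"
  define r where "r = (\<Sum>i<n. Polynomial.monom (1::complex) i)"
  have deg: "degree q = n - 1" unfolding q_def by (subst degree_prod_sum_eq) (auto simp: card)
  have "q = r"
  proof (rule poly_eqI_degree_lead_coeff[of q "n - 1" r A])
    have "poly.coeff q (n - 1) = lead_coeff q" using deg by simp
    also have "\<dots> = 1" by (simp add: q_def lead_coeff_prod)
    finally have "poly.coeff q (n - 1) = 1" .
    moreover have "poly.coeff r (n - 1) = 1" using assms by (simp add: r_def coeff_sum)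
    ultimately show "poly.coeff q (n - 1) = poly.coeff r (n - 1)" by simp
    show "degree r \<le> n - 1" unfolding r_def
      by (intro degree_sum_le) (auto intro: order.trans[OF degree_monom_le])
    fix z assume z: "z \<in> A"
    have "poly q z = 0" unfolding q_def poly_prod using fin z by (intro prod_zero) auto
    moreover have "poly r z = 0"
      using z by (simp add: r_def A_def poly_sum poly_monom geometric_sum)
    ultimately show "poly q z = poly r z" by simp
  qed (use card deg in auto)
  then have "poly q 1 = poly r 1" by simp
  then show ?thesis by (simp add: q_def r_def A_def poly_prod poly_sum poly_monom)
qed

lemma prod_diff_roots_unity:
  assumes "n > 0" and "u ^ n = (1::complex)"
  shows "(\<Prod>w\<in>{z::complex. z ^ n = 1} - {u}. u - w) = u ^ (n - 1) * of_nat n"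
proof -
  define R where "R = {z::complex. z ^ n = 1}"
  have "u \<noteq> 0" using assms by (auto simp: power_0_left)
  have bij: "bij_betw ((*) u) (R - {1}) (R - {u})"
  proof (rule bij_betw_imageI)
    show "inj_on ((*) u) (R - {1})" using \<open>u \<noteq> 0\<close> by (auto simp: inj_on_def)
    show "(*) u ` (R - {1}) = R - {u}"
    proof safe
      fix w assume w: "w \<in> R" "w \<notin> (*) u ` (R - {1})"
      have "w / u \<in> R" using w assms unfolding R_def by (simp add: power_divide)
      moreover have "w = u * (w / u)" using \<open>u \<noteq> 0\<close> by simp
      ultimately have "w / u = 1" using w by blast
      then show "w = u" using \<open>u \<noteq> 0\<close> by simp
    qed (use assms \<open>u \<noteq> 0\<close> in \<open>auto simp: R_def power_mult_distrib\<close>)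
  qed
  have "(\<Prod>w\<in>R - {u}. u - w) = (\<Prod>z\<in>R - {1}. u - u * z)"
    by (rule prod.reindex_bij_betw[OF bij, symmetric])
  also have "\<dots> = (\<Prod>z\<in>R - {1}. u * (1 - z))" by (simp add: algebra_simps)
  also have "\<dots> = u ^ (n - 1) * of_nat n"
    using assms prod_one_minus_roots_unity[of n] card_roots_unity_eq[of n] finite_roots_unity[of n]
    by (simp add: prod.distrib R_def card_Diff_singleton)
  finally show ?thesis unfolding R_def .
qed

lemma bij_betw_cis_powers_roots_unity:
  assumes "n > 0"
  shows "bij_betw (\<lambda>j. cis (2 * pi / n) ^ j) {1..n} {z::complex. z ^ n = 1}"
proof -
  let ?f = "\<lambda>j. cis (2 * pi / n) ^ j"
  have "?f k = cis (2 * pi * real k / real n)" for k by (simp add: Complex.DeMoivre mult_ac)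
  then have "?f ` {..<n} = {z. z ^ n = 1}"
    using Complex.bij_betw_roots_unity[OF assms] by (simp add: bij_betw_def)
  moreover have "?f ` {1..n} = ?f ` {..<n}"
  proof -
    have "?f n = ?f 0" using assms by (simp add: Complex.DeMoivre)
    moreover have "{1..n} = insert n {1..<n}" "{..<n} = insert 0 {1..<n}" using assms by auto
    ultimately show ?thesis by (simp only: image_insert)
  qed
  ultimately have "?f ` {1..n} = {z. z ^ n = 1}" by simp
  moreover from this have "inj_on ?f {1..n}"
    using assms by (intro eq_card_imp_inj_on) (auto simp: card_roots_unity_eq)
  ultimately show ?thesis by (simp add: bij_betw_def)
qed

definition increasing_pairs :: "nat \<Rightarrow> (nat \<times> nat) set" where
  "increasing_pairs n = {(i, j). 1 \<le> i \<and> i < j \<and> j \<le> n}"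

lemma finite_increasing_pairs [simp]: "finite (increasing_pairs n)"
  unfolding increasing_pairs_def by (rule finite_subset[of _ "{1..n} \<times> {1..n}"]) auto

lemma increasing_pairs_0 [simp]: "increasing_pairs 0 = {}"
  by (auto simp: increasing_pairs_def)

lemma increasing_pairs_Suc:
  "increasing_pairs (Suc n) = increasing_pairs n \<union> (\<lambda>i. (i, Suc n)) ` {1..n}"
  "increasing_pairs n \<inter> (\<lambda>i. (i, Suc n)) ` {1..n} = {}"
  by (auto simp: increasing_pairs_def)

lemma card_increasing_pairs: "2 * card (increasing_pairs n) = n * (n - 1)"
proof (induction n)
  case 0 then show ?case by simp
next
  case (Suc n)
  have "card (increasing_pairs (Suc n)) = card (increasing_pairs n) + n"
    unfolding increasing_pairs_Suc(1) using increasing_pairs_Suc(2)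
    by (subst card_Un_disjoint) (auto simp: card_image inj_on_def)
  with Suc show ?case by (cases n) (auto simp: algebra_simps)
qed

lemma sum_increasing_pairs: "2 * (\<Sum>(i, j)\<in>increasing_pairs n. i + j) = (n + 1) * n * (n - 1)"
proof (induction n)
  case 0 then show ?case by simp
next
  case (Suc n)
  have "(\<Sum>(i, j)\<in>increasing_pairs (Suc n). i + j)
      = (\<Sum>(i, j)\<in>increasing_pairs n. i + j) + (\<Sum>i\<in>{1..n}. i + Suc n)"
    unfolding increasing_pairs_Suc(1) using increasing_pairs_Suc(2)
    by (subst sum.union_disjoint) (auto simp: sum.reindex inj_on_def)
  moreover have "(\<Sum>i\<in>{1..n}. i + Suc n) = (\<Sum>i\<in>{1..n}. i) + n * Suc n"
    by (simp only: sum.distrib) simp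
  moreover have "2 * (\<Sum>i\<in>{1..n}. i) = n * (n + 1)"
    using double_gauss_sum_from_Suc_0[of n, where ?'a = nat] by simp
  ultimately show ?case using Suc by (cases n) (auto simp: algebra_simps)
qed

lemma norm_vandermonde_roots_unity_squared:
  assumes "n > 0"
  defines "w \<equiv> cis (2 * pi / n)"
  shows "(\<Prod>(i, j)\<in>increasing_pairs n. cmod (w ^ j - w ^ i)) ^ 2 = real n ^ n"
proof -
  define S where "S = increasing_pairs n"
  define f where "f = (\<lambda>(i, j). cmod (w ^ i - w ^ j))"
  have f_swap: "f (prod.swap x) = f x" for x by (cases x) (simp add: f_def norm_minus_commute)
  have f_prod: "(\<Prod>(i, j)\<in>S. cmod (w ^ j - w ^ i)) = prod f S"
    by (intro prod.cong) (auto simp: f_def norm_minus_commute)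
  have "(prod f S) ^ 2 = prod f S * prod f (prod.swap ` S)"
    by (simp add: power2_eq_square prod.reindex swap_inj_on f_swap)
  also have "\<dots> = prod f (S \<union> prod.swap ` S)"
    by (subst prod.union_disjoint) (auto simp: S_def, auto simp: increasing_pairs_def)
  also have "S \<union> prod.swap ` S = Sigma {1..n} (\<lambda>i. {1..n} - {i})"
    by (auto simp: S_def increasing_pairs_def image_iff)
  also have "prod f \<dots> = (\<Prod>i\<in>{1..n}. \<Prod>j\<in>{1..n} - {i}. f (i, j))"
    by (simp add: prod.Sigma)
  also have "\<dots> = (\<Prod>i\<in>{1..n}. real n)"
  proof (intro prod.cong refl)
    fix i assume i: "i \<in> {1..n}"
    note bij = bij_betw_cis_powers_roots_unity[OF assms(1), folded w_def]
    have u: "(w ^ i) ^ n = 1" using bij_betw_apply[OF bij i] by simp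
    have "(\<Prod>j\<in>{1..n} - {i}. w ^ i - w ^ j) = (\<Prod>z\<in>{z. z ^ n = 1} - {w ^ i}. w ^ i - z)"
      by (rule prod.reindex_bij_betw[OF bij_betw_DiffI[OF bij]]) (use i u in auto)
    also have "\<dots> = (w ^ i) ^ (n - 1) * of_nat n" by (rule prod_diff_roots_unity[OF assms(1) u])
    finally have "cmod (\<Prod>j\<in>{1..n} - {i}. w ^ i - w ^ j) = real n"
      by (simp add: norm_mult norm_power w_def)
    then show "(\<Prod>j\<in>{1..n} - {i}. f (i, j)) = real n"
      by (simp add: f_def prod_norm)
  qed
  finally show ?thesis by (simp add: f_prod[unfolded S_def, symmetric] S_def)
qed

lemma exp_of_real_mult_i: "exp (of_real t * \<i>) = cis t"
  by (simp add: cis_conv_exp mult.commute)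

lemma cis_diff_cis:
  "cis a - cis b = exp (of_real ((a + b) / 2) * \<i>) * \<i> * of_real (2 * sin ((a - b) / 2))"
proof -
  define x y where "x = (a + b) / 2" and "y = (a - b) / 2"
  have ab: "a = x + y" "b = x - y" by (simp_all add: x_def y_def field_simps)
  have "cis a - cis b = cis x * \<i> * of_real (2 * sin y)"
    unfolding ab by (simp add: complex_eq_iff cos_add sin_add cos_diff sin_diff algebra_simps)
  also have "\<dots> = exp (of_real ((a + b) / 2) * \<i>) * \<i> * of_real (2 * sin ((a - b) / 2))"
    by (simp only: x_def y_def exp_of_real_mult_i)
  finally show ?thesis .
qed

lemma i_power_eq_exp: "\<i> ^ k = exp (of_real (pi / 2 * k) * \<i>)"
proof -
  have "\<i> ^ k = cis (pi / 2) ^ k" by simp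
  also have "\<dots> = cis (pi / 2 * k)" by (simp only: Complex.DeMoivre mult.commute)
  also have "\<dots> = exp (of_real (pi / 2 * k) * \<i>)" by (rule exp_of_real_mult_i[symmetric])
  finally show ?thesis .
qed

lemma vandermonde_roots_unity_polar:
  assumes "n > 0"
  defines "w \<equiv> cis (2 * pi / n)"
  shows "(\<Prod>(i, j)\<in>increasing_pairs n. w ^ j - w ^ i)
    = exp (of_real (pi * (real n - 1) * (3 * real n + 2) / 4) * \<i>)
      * of_real (\<Prod>(i, j)\<in>increasing_pairs n. 2 * sin (pi * (real j - real i) / n))"
proof -
  define S where "S = increasing_pairs n"
  define T where "T = (\<Sum>(i, j)\<in>S. i + j)"
  have factor: "w ^ j - w ^ i = exp (of_real (pi / n * (i + j)) * \<i>) * \<i>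
      * of_real (2 * sin (pi * (real j - real i) / n))" for i j
  proof -
    have "w ^ j - w ^ i = cis (2 * pi * j / n) - cis (2 * pi * i / n)"
      by (simp add: w_def Complex.DeMoivre mult_ac)
    also have "\<dots> = exp (of_real (pi / n * (i + j)) * \<i>) * \<i>
        * of_real (2 * sin (pi * (real j - real i) / n))"
      by (simp add: cis_diff_cis add_divide_distrib diff_divide_distrib algebra_simps)
    finally show ?thesis .
  qed
  have "(\<Prod>(i, j)\<in>S. w ^ j - w ^ i) = exp (of_real (pi / n * T) * \<i>) * \<i> ^ card S
      * of_real (\<Prod>(i, j)\<in>S. 2 * sin (pi * (real j - real i) / n))"
    by (simp add: factor case_prod_unfold prod.distrib exp_sum[symmetric] T_def S_def
        sum_distrib_left sum_distrib_right)
  also have "exp (of_real (pi / n * T) * \<i>) * \<i> ^ card S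
      = exp (of_real (pi * (real n - 1) * (3 * real n + 2) / 4) * \<i>)"
  proof -
    have "real (2 * T) = real ((n + 1) * n * (n - 1))"
      unfolding T_def S_def by (simp only: sum_increasing_pairs)
    then have T: "real T = (real n + 1) * real n * (real n - 1) / 2"
      using assms by (simp add: of_nat_diff algebra_simps)
    have "real (2 * card S) = real (n * (n - 1))"
      unfolding S_def by (simp only: card_increasing_pairs)
    then have card: "real (card S) = real n * (real n - 1) / 2"
      using assms by (simp add: of_nat_diff)
    have phase: "pi / n * T + pi / 2 * card S = pi * (real n - 1) * (3 * real n + 2) / 4"
      using assms by (simp add: T card field_simps)
    show ?thesis
      unfolding i_power_eq_exp exp_add[symmetric] distrib_right[symmetric] of_real_add[symmetric] phase ..
  qed
  finally show ?thesis by (simp add: S_def)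
qed

lemma sin_increasing_pairs_pos:
  assumes "(i, j) \<in> increasing_pairs n"
  shows "sin (pi * (real j - real i) / n) > 0"
proof -
  define x where "x = (real j - real i) / n"
  have "0 < x" "x < 1" using assms by (auto simp: x_def increasing_pairs_def field_simps)
  then have "sin (pi * x) > 0" by (intro sin_gt_zero) simp_all
  then show ?thesis by (simp add: x_def)
qed

theorem vandermonde_roots_unity:
  assumes "n > 0"
  defines "w \<equiv> cis (2 * pi / n)"
  shows "(\<Prod>(i, j)\<in>increasing_pairs n. w ^ j - w ^ i)
    = exp (of_real (pi * (real n - 1) * (3 * real n + 2) / 4) * \<i>) * of_real (sqrt n ^ n)"
proof -
  define R where "R = (\<Prod>(i, j)\<in>increasing_pairs n. 2 * sin (pi * (real j - real i) / n))"
  have polar: "(\<Prod>(i, j)\<in>increasing_pairs n. w ^ j - w ^ i)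
      = exp (of_real (pi * (real n - 1) * (3 * real n + 2) / 4) * \<i>) * of_real R"
    unfolding R_def w_def by (rule vandermonde_roots_unity_polar[OF assms(1)])
  have "R \<ge> 0"
    unfolding R_def by (intro prod_nonneg) (auto dest: sin_increasing_pairs_pos less_imp_le)
  have "(\<Prod>(i, j)\<in>increasing_pairs n. cmod (w ^ j - w ^ i))
      = cmod (\<Prod>(i, j)\<in>increasing_pairs n. w ^ j - w ^ i)"
    by (simp add: prod_norm case_prod_unfold)
  also have "\<dots> = R" using \<open>R \<ge> 0\<close> by (simp add: polar norm_mult exp_of_real_mult_i)
  finally have "R ^ 2 = (\<Prod>(i, j)\<in>increasing_pairs n. cmod (w ^ j - w ^ i)) ^ 2" by simp
  also have "\<dots> = real n ^ n"
    unfolding w_def by (rule norm_vandermonde_roots_unity_squared[OF assms(1)])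
  also have "\<dots> = (sqrt n ^ 2) ^ n" by simp
  also have "\<dots> = (sqrt n ^ n) ^ 2" by (simp only: power_mult[symmetric] mult.commute)
  finally have "R = sqrt n ^ n" using \<open>R \<ge> 0\<close> by (simp add: power2_eq_iff_nonneg)
  then show ?thesis using polar by simp
qed

(* OK_ring carries the operations of C, so its ideals are handled as subsets of C. *)
locale subring_ideal =
  fixes K P :: "'a :: comm_ring_1 set"
  assumes one_mem: "1 \<in> K"
    and add_mem: "x \<in> K \<Longrightarrow> y \<in> K \<Longrightarrow> x + y \<in> K"
    and mult_mem: "x \<in> K \<Longrightarrow> y \<in> K \<Longrightarrow> x * y \<in> K"
    and uminus_mem: "x \<in> K \<Longrightarrow> - x \<in> K"
    and ideal_subset: "P \<subseteq> K"
    and zero_in_ideal: "0 \<in> P"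
    and add_in_ideal: "x \<in> P \<Longrightarrow> y \<in> P \<Longrightarrow> x + y \<in> P"
    and mult_in_ideal: "x \<in> P \<Longrightarrow> y \<in> K \<Longrightarrow> y * x \<in> P"
begin

lemma diff_mem: "x \<in> K \<Longrightarrow> y \<in> K \<Longrightarrow> x - y \<in> K"
  using add_mem uminus_mem by (metis diff_conv_add_uminus)

lemma of_nat_mem: "of_nat k \<in> K"
  by (induction k) (use one_mem add_mem zero_in_ideal ideal_subset in auto)

lemma power_mem: "x \<in> K \<Longrightarrow> x ^ k \<in> K"
  by (induction k) (auto intro: one_mem mult_mem)

lemma diff_in_ideal: "x \<in> P \<Longrightarrow> y \<in> P \<Longrightarrow> x - y \<in> P"
  using add_in_ideal mult_in_ideal[of y "-1"] one_mem uminus_mem by (metis diff_conv_add_uminus mult_minus1)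

lemma cong_mult:
  assumes "a \<in> K" "d \<in> K" "a - b \<in> P" "c - d \<in> P"
  shows "a * c - b * d \<in> P"
proof -
  have "a * c - b * d = a * (c - d) + d * (a - b)" by (simp add: algebra_simps)
  then show ?thesis using assms by (auto intro!: add_in_ideal mult_in_ideal)
qed

lemma cong_power:
  assumes "a \<in> K" "b \<in> K" "a - b \<in> P"
  shows "a ^ k - b ^ k \<in> P"
  by (induction k) (use assms zero_in_ideal in \<open>auto intro!: cong_mult power_mem\<close>)

lemma cong_prod:
  assumes "finite A" "\<And>x. x \<in> A \<Longrightarrow> f x \<in> K" "\<And>x. x \<in> A \<Longrightarrow> h x \<in> K"
    and "\<And>x. x \<in> A \<Longrightarrow> f x - h x \<in> P"
  shows "prod f A - prod h A \<in> P"
proof -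
  have "prod h A \<in> K \<and> prod f A - prod h A \<in> P"
    using assms by (induction A rule: finite_induct) (auto intro: one_mem zero_in_ideal mult_mem cong_mult)
  then show ?thesis ..
qed

lemma cong_vandermonde:
  assumes "finite A" "a \<in> K" "b \<in> K" "a - b \<in> P"
  shows "(\<Prod>(i, j)\<in>A. a ^ j - a ^ i) - (\<Prod>(i, j)\<in>A. b ^ j - b ^ i) \<in> P"
proof (rule cong_prod)
  fix x assume "x \<in> A"
  obtain i j where x: "x = (i, j)" by fastforce
  have "(a ^ j - a ^ i) - (b ^ j - b ^ i) = (a ^ j - b ^ j) - (a ^ i - b ^ i)" by simp
  also have "\<dots> \<in> P" using assms by (intro diff_in_ideal[OF cong_power cong_power])
  finally show "(case x of (i, j) \<Rightarrow> a ^ j - a ^ i) - (case x of (i, j) \<Rightarrow> b ^ j - b ^ i) \<in> P"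
    by (simp add: x)
qed (use assms in \<open>auto intro: diff_mem power_mem\<close>)

end

lemma subring_ideal_OK_ring:
  assumes "ideal P (OK_ring z)"
  shows "subring_ideal (ring_of_integers z) P"
proof -
  interpret I: ideal P "OK_ring z" by (fact assms)
  have carrier: "carrier (OK_ring z) = ring_of_integers z" by (simp add: OK_ring_def)
  have ops: "(\<otimes>\<^bsub>OK_ring z\<^esub>) = (*)" "(\<oplus>\<^bsub>OK_ring z\<^esub>) = (+)" "\<one>\<^bsub>OK_ring z\<^esub> = 1"
    "\<zero>\<^bsub>OK_ring z\<^esub> = 0"
    by (simp_all add: OK_ring_def)
  have uminus: "\<ominus>\<^bsub>OK_ring z\<^esub> x = - x" if "x \<in> ring_of_integers z" for x
    using I.r_neg[of x] that by (simp add: carrier ops eq_neg_iff_add_eq_0 add.commute)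
  show ?thesis
  proof
    fix x y assume "x \<in> ring_of_integers z" "y \<in> ring_of_integers z"
    then show "x + y \<in> ring_of_integers z" "x * y \<in> ring_of_integers z"
      using I.add.m_closed I.m_closed by (simp_all add: carrier ops)
  next
    fix x assume "x \<in> ring_of_integers z"
    then show "- x \<in> ring_of_integers z" using I.a_inv_closed uminus by (simp add: carrier)
  next
    fix x y assume "x \<in> P" "y \<in> ring_of_integers z"
    then show "y * x \<in> P" using I.I_l_closed by (simp add: carrier ops)
  qed (use I.a_subset I.one_closed additive_subgroup.zero_closed[OF I.additive_subgroup_axioms]
      additive_subgroup.a_closed[OF I.additive_subgroup_axioms] in \<open>simp_all add: carrier ops\<close>)
qed

lemma zeta_squared: "zeta (2 * k + 1) ^ 2 = cis (2 * pi / k)"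
proof -
  have "zeta (2 * k + 1) ^ 2 = exp (of_nat 2 * (2 * of_real pi * \<i> / of_nat (2 * k)))"
    unfolding zeta_def by (simp flip: exp_of_nat_mult)
  also have "\<dots> = exp (\<i> * of_real (2 * pi / k))"
    by (cases "k = 0") (simp_all add: field_simps)
  finally show ?thesis by (simp add: cis_conv_exp)
qed

theorem lemma2p2:
  fixes p g :: nat and P :: "complex set"
  assumes "prime p" and "p mod 4 = 1"
    and "g \<in> {1..p-1}" and "residue_primroot p g"
    and "primeideal P (OK_ring (zeta p))"
    and "of_nat p \<in> P"
    and "of_nat g - zeta p \<in> P"
  shows "(\<Prod>(i, j) \<in> {(i, j). 1 \<le> i \<and> i < j \<and> j \<le> (p - 1) div 2}.
            (of_nat g ^ (2 * j) - of_nat g ^ (2 * i) :: complex))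
         - exp (of_real ((real p - 3) * (3 * real p + 1) / 16 * pi) * \<i>)
           * (of_nat ((p - 1) div 2)) ^ ((p - 1) div 4) \<in> P"
proof -
  interpret OK: subring_ideal "ring_of_integers (zeta p)" P
    using assms(5) by (intro subring_ideal_OK_ring primeideal.axioms(1))
  define m n where "m = p div 4" and "n = (p - 1) div 2"
  have p_eq: "p = 4 * m + 1" using assms(2) div_mult_mod_eq[of p 4] by (simp add: m_def)
  moreover have "p \<ge> 2" using assms(1) by (rule prime_ge_2_nat)
  ultimately have n: "n = 2 * m" "n > 0" "p = 2 * n + 1" by (simp_all add: n_def)
  have "zeta p = of_nat g - (of_nat g - zeta p)" by simp
  also have "\<dots> \<in> ring_of_integers (zeta p)"
    by (rule OK.diff_mem[OF OK.of_nat_mem]) (use assms(7) OK.ideal_subset in auto)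
  finally have "zeta p \<in> ring_of_integers (zeta p)" .
  then have "(\<Prod>(i, j)\<in>increasing_pairs n. (of_nat g ^ 2) ^ j - (of_nat g ^ 2) ^ i)
      - (\<Prod>(i, j)\<in>increasing_pairs n. (zeta p ^ 2) ^ j - (zeta p ^ 2) ^ i) \<in> P"
    using assms(7) by (intro OK.cong_vandermonde OK.cong_power OK.power_mem OK.of_nat_mem) auto
  also have "(\<Prod>(i, j)\<in>increasing_pairs n. (zeta p ^ 2) ^ j - (zeta p ^ 2) ^ i)
      = exp (of_real (pi * (real n - 1) * (3 * real n + 2) / 4) * \<i>) * of_real (sqrt n ^ n)"
    unfolding \<open>p = 2 * n + 1\<close> zeta_squared by (rule vandermonde_roots_unity[OF \<open>n > 0\<close>])
  also have "pi * (real n - 1) * (3 * real n + 2) / 4 = (real p - 3) * (3 * real p + 1) / 16 * pi"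
    using n by (simp add: field_simps)
  also have "sqrt n ^ n = real n ^ ((p - 1) div 4)"
    using p_eq n by (simp add: power_mult real_sqrt_pow2)
  finally show ?thesis by (simp add: increasing_pairs_def n_def power_mult)
qed

end
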